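(* Let $X$ be any set and let $X_d$ denote $X$ with the discrete topology. Then: (1) $2^{X_d}_{SL}$ is an Alexandroff $T_0$-space. (2) For every $C\in 2^X$, the minimal open neighbourhood of $C$ in $2^{X_d}_{SL}$ is $\bigcap_{c\in C}L_{\{c\}}=\{D\in 2^X \mid C\subseteq D\}$. (3) The partial order on $2^X$ associated to the Alexandroff $T_0$-space $2^{X_d}_{SL}$ is given by $C\geq D$ if and only if $C\subseteq D$. (4) The identity map $I:2^{X_d}_{SL}\to 2^{X_d}_L$ is continuous, and its inverse $I^{-1}:2^{X_d}_L\to 2^{X_d}_{SL}$ is continuous at a point $C\in 2^X$ if and only if $C$ is a finite set. (5) The Alexandroff $T_0$-topology on $2^X$ associated to the opposite partial order (i.e. $C\geq D$ iff $D\subseteq C$) is exactly the upper semifinite topology, so the resulting space is $2^{X_d}_U$.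
   Context: $2^X$ denotes the set of all non-empty subsets of $X$ (all of which are closed in the discrete space $X_d$). For $U\subseteq X$ put $L_U=\{F\subseteq X\mid F\neq\emptyset,\ F\cap U\neq\emptyset\}$. The lower semifinite topology on $2^X$ is generated by the subbase $\{L_U\mid U\subseteq X\}$; the space is denoted $2^{X_d}_L$. The strong lower semifinite topology on $2^X$ is the topology generated by the family $SL=\{\bigcap_{i\in I}L_{U_i}\mid I \text{ any index set with } \mathrm{Card}(I)\le\mathrm{Card}(X),\ U_i\subseteq X\}$; the space is denoted $2^{X_d}_{SL}$. The upper semifinite topology on $2^X$ is the topology with base $\{\{F\in 2^X\mid F\subseteq U\}\mid U\subseteq X\}$; the space is denoted $2^{X_d}_U$. An Alexandroff space is a topological space in which arbitrary intersections of open sets are open; each point $x$ then has a minimal open neighbourhood $U_x$. For an Alexandroff $T_0$-space the associated partial order is $y\le x$ iff $y\in U_x$ (so $U_x=\{y\mid y\le x\}$); conversely a partial order determines the Alexandroff $T_0$-topology whose open sets are the down-sets. *)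

theory Defs
  imports "HOL-Analysis.Analysis"
begin

text \<open>The hyperspace 2^X: all non-empty subsets of X (all closed in the discrete space X_d).\<close>
definition nonempty_subsets :: "'a set \<Rightarrow> 'a set set" where
  "nonempty_subsets X = {F. F \<subseteq> X \<and> F \<noteq> {}}"

definition lowerL :: "'a set \<Rightarrow> 'a set \<Rightarrow> 'a set set" where
  "lowerL X U = {F \<in> nonempty_subsets X. F \<inter> U \<noteq> {}}"

text \<open>Lower semifinite topology on 2^X (X discrete): generated by the subbase {L_U | U subset X}.\<close>
definition lower_semifinite :: "'a set \<Rightarrow> 'a set topology" where
  "lower_semifinite X = topology_generated_by {lowerL X U | U. U \<subseteq> X}"

text \<open>The index set is taken inside the type of X (any index set of cardinality at most Card(X)
  can be renamed into such a set).\<close>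
definition SL_family :: "'a set \<Rightarrow> 'a set set set" where
  "SL_family X = {nonempty_subsets X \<inter> (\<Inter>i\<in>I. lowerL X (U i)) | (I :: 'a set) U.
                    (card_of I, card_of X) \<in> ordLeq \<and> (\<forall>i\<in>I. U i \<subseteq> X)}"

definition strong_lower_semifinite :: "'a set \<Rightarrow> 'a set topology" where
  "strong_lower_semifinite X = topology_generated_by (SL_family X)"

text \<open>Upper semifinite topology on 2^X (X discrete): base {{F in 2^X | F subset U} | U subset X}.\<close>
definition upper_semifinite :: "'a set \<Rightarrow> 'a set topology" where
  "upper_semifinite X = topology_generated_by {{F \<in> nonempty_subsets X. F \<subseteq> U} | U. U \<subseteq> X}"

definition alexandroff_space :: "'a topology \<Rightarrow> bool" where
  "alexandroff_space T \<longleftrightarrow>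
     (\<forall>\<U>. (\<forall>U\<in>\<U>. openin T U) \<longrightarrow> openin T (topspace T \<inter> \<Inter>\<U>))"

definition min_open_nbhd :: "'a topology \<Rightarrow> 'a \<Rightarrow> 'a set" where
  "min_open_nbhd T x = topspace T \<inter> \<Inter>{U. openin T U \<and> x \<in> U}"

definition alex_le :: "'a topology \<Rightarrow> 'a \<Rightarrow> 'a \<Rightarrow> bool" where
  "alex_le T y x \<longleftrightarrow> y \<in> min_open_nbhd T x"

definition alex_topology :: "'a set \<Rightarrow> ('a \<Rightarrow> 'a \<Rightarrow> bool) \<Rightarrow> 'a topology" where
  "alex_topology S le = topology (\<lambda>A. A \<subseteq> S \<and> (\<forall>x\<in>A. \<forall>y\<in>S. le y x \<longrightarrow> y \<in> A))"

definition continuous_at_point :: "'a topology \<Rightarrow> 'b topology \<Rightarrow> ('a \<Rightarrow> 'b) \<Rightarrow> 'a \<Rightarrow> bool" where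
  "continuous_at_point T S f x \<longleftrightarrow>
     f x \<in> topspace S \<and>
     (\<forall>V. openin S V \<and> f x \<in> V \<longrightarrow> (\<exists>U. openin T U \<and> x \<in> U \<and> f ` U \<subseteq> V))"

end

theory Submission
  imports Defs
begin

text \<open>The open sets of \<open>2^{X_d}_{SL}\<close> are exactly the up-sets of \<open>(2^X, \<subseteq>)\<close>: the up-set
  generated by \<open>C\<close> is \<open>\<Inter>c\<in>C. L_{c}\<close>, an intersection of at most \<open>Card(X)\<close> subbasic sets.
  Hence the space is Alexandroff with minimal neighbourhoods the up-sets of single points.
  Open sets of \<open>2^{X_d}_L\<close> are up-sets determined by finite subsets, since each \<open>L_U\<close> is,
  so the up-set of \<open>C\<close> is an \<open>L\<close>-neighbourhood of \<open>C\<close> exactly when \<open>C\<close> is finite. Dually, the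
  upper semifinite open sets are exactly the down-sets.\<close>

definition supersets :: "'a set \<Rightarrow> 'a set \<Rightarrow> 'a set set" where
  "supersets X C = {D \<in> nonempty_subsets X. C \<subseteq> D}"

definition upclosed :: "'a set \<Rightarrow> 'a set set \<Rightarrow> bool" where
  "upclosed X W \<longleftrightarrow> W \<subseteq> nonempty_subsets X \<and> (\<forall>C\<in>W. \<forall>D\<in>nonempty_subsets X. C \<subseteq> D \<longrightarrow> D \<in> W)"

definition downclosed :: "'a set \<Rightarrow> 'a set set \<Rightarrow> bool" where
  "downclosed X W \<longleftrightarrow> W \<subseteq> nonempty_subsets X \<and> (\<forall>C\<in>W. \<forall>D\<in>nonempty_subsets X. D \<subseteq> C \<longrightarrow> D \<in> W)"

definition finitely_determined :: "'a set \<Rightarrow> 'a set set \<Rightarrow> bool" where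
  "finitely_determined X W \<longleftrightarrow> W \<subseteq> nonempty_subsets X \<and>
     (\<forall>C\<in>W. \<exists>F. finite F \<and> F \<subseteq> C \<and> supersets X F \<subseteq> W)"

lemma finitely_determined_imp_upclosed: "finitely_determined X W \<Longrightarrow> upclosed X W"
  unfolding finitely_determined_def upclosed_def supersets_def by blast

lemma upclosed_supersets: "upclosed X (supersets X C)"
  unfolding upclosed_def supersets_def by auto

lemma supersets_subset_upclosed: "upclosed X W \<Longrightarrow> C \<in> W \<Longrightarrow> supersets X C \<subseteq> W"
  unfolding upclosed_def supersets_def by auto

lemma self_in_supersets: "C \<in> nonempty_subsets X \<Longrightarrow> C \<in> supersets X C"
  unfolding supersets_def by simp

lemma supersets_eq_Inter_lowerL:
  "supersets X C = nonempty_subsets X \<inter> (\<Inter>c\<in>C. lowerL X {c})"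
  unfolding supersets_def lowerL_def by auto

lemma supersets_in_SL_family:
  assumes "C \<subseteq> X"
  shows "supersets X C \<in> SL_family X"
  unfolding SL_family_def supersets_eq_Inter_lowerL
  using card_of_mono1[OF assms] assms
  by (intro CollectI exI[of _ C] exI[of _ "\<lambda>c. {c}"]) auto

lemma openin_strong_lower_semifinite_iff:
  "openin (strong_lower_semifinite X) W \<longleftrightarrow> upclosed X W"
proof
  assume "openin (strong_lower_semifinite X) W"
  then have "generate_topology_on (SL_family X) W"
    unfolding strong_lower_semifinite_def by (simp add: openin_topology_generated_by_iff)
  then show "upclosed X W"
  proof (induction rule: generate_topology_on.induct)
    case (Basis s)
    then show ?case unfolding upclosed_def SL_family_def lowerL_def by blast
  qed (unfold upclosed_def; blast)+
next
  assume up: "upclosed X W"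
  then have "W = \<Union>(supersets X ` W)"
    unfolding upclosed_def supersets_def by auto
  moreover have "generate_topology_on (SL_family X) (\<Union>(supersets X ` W))"
  proof (rule generate_topology_on.UN, clarify)
    fix C assume "C \<in> W"
    then have "C \<subseteq> X" using up unfolding upclosed_def nonempty_subsets_def by auto
    then show "generate_topology_on (SL_family X) (supersets X C)"
      by (intro generate_topology_on.Basis supersets_in_SL_family)
  qed
  ultimately show "openin (strong_lower_semifinite X) W"
    unfolding strong_lower_semifinite_def by (simp add: openin_topology_generated_by_iff)
qed

lemma topspace_strong_lower_semifinite:
  "topspace (strong_lower_semifinite X) = nonempty_subsets X"
proof -
  have "upclosed X (topspace (strong_lower_semifinite X))"
    using openin_strong_lower_semifinite_iff by blast
  moreover have "openin (strong_lower_semifinite X) (nonempty_subsets X)"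
    by (simp add: openin_strong_lower_semifinite_iff upclosed_def)
  ultimately show ?thesis
    using openin_subset unfolding upclosed_def by blast
qed

lemma openin_strong_lower_semifinite_supersets:
  "openin (strong_lower_semifinite X) (supersets X C)"
  by (simp add: openin_strong_lower_semifinite_iff upclosed_supersets)

lemma min_open_nbhd_strong_lower_semifinite:
  assumes "C \<in> nonempty_subsets X"
  shows "min_open_nbhd (strong_lower_semifinite X) C = supersets X C"
proof -
  have "supersets X C \<in> {U. openin (strong_lower_semifinite X) U \<and> C \<in> U}"
    using assms openin_strong_lower_semifinite_supersets self_in_supersets by blast
  then show ?thesis
    unfolding min_open_nbhd_def topspace_strong_lower_semifinite openin_strong_lower_semifinite_iff
    using supersets_subset_upclosed by (auto simp: supersets_def)
qed

lemma alex_le_strong_lower_semifinite: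
  assumes "C \<in> nonempty_subsets X" "D \<in> nonempty_subsets X"
  shows "alex_le (strong_lower_semifinite X) D C \<longleftrightarrow> C \<subseteq> D"
  using assms unfolding alex_le_def min_open_nbhd_strong_lower_semifinite[OF assms(1)]
  by (simp add: supersets_def)

lemma alexandroff_strong_lower_semifinite: "alexandroff_space (strong_lower_semifinite X)"
  unfolding alexandroff_space_def openin_strong_lower_semifinite_iff
    topspace_strong_lower_semifinite upclosed_def by blast

lemma t0_strong_lower_semifinite: "t0_space (strong_lower_semifinite X)"
  unfolding t0_space_def topspace_strong_lower_semifinite
proof (intro ballI impI)
  fix C D assume CD: "C \<in> nonempty_subsets X" "D \<in> nonempty_subsets X" "C \<noteq> D"
  have separates: "B \<in> supersets X B" "A \<notin> supersets X B"
    if "B \<in> nonempty_subsets X" "\<not> B \<subseteq> A" for A B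
    using that by (simp_all add: supersets_def)
  show "\<exists>U. openin (strong_lower_semifinite X) U \<and> (C \<notin> U) = (D \<in> U)"
  proof (cases "C \<subseteq> D")
    case True
    with CD have "\<not> D \<subseteq> C" by auto
    with CD(2) show ?thesis
      using separates[of D C] openin_strong_lower_semifinite_supersets
      by (intro exI[of _ "supersets X D"]) simp
  next
    case False
    with CD(1) show ?thesis
      using separates[of C D] openin_strong_lower_semifinite_supersets
      by (intro exI[of _ "supersets X C"]) simp
  qed
qed

lemma lowerL_in_subbase: "U \<subseteq> X \<Longrightarrow> generate_topology_on {lowerL X U | U. U \<subseteq> X} (lowerL X U)"
  by (intro generate_topology_on.Basis) blast

lemma openin_lower_semifinite_imp_finitely_determined:
  assumes "openin (lower_semifinite X) W"
  shows "finitely_determined X W"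
proof -
  have "generate_topology_on {lowerL X U | U. U \<subseteq> X} W"
    using assms unfolding lower_semifinite_def by (simp add: openin_topology_generated_by_iff)
  then show ?thesis
  proof (induction rule: generate_topology_on.induct)
    case Empty
    then show ?case by (simp add: finitely_determined_def)
  next
    case (Int a b)
    show ?case unfolding finitely_determined_def
    proof (intro conjI ballI)
      show "a \<inter> b \<subseteq> nonempty_subsets X"
        using Int.IH unfolding finitely_determined_def by blast
      fix C assume C: "C \<in> a \<inter> b"
      obtain F where "finite F" "F \<subseteq> C" "supersets X F \<subseteq> a"
        using Int.IH(1) C unfolding finitely_determined_def by blast
      moreover obtain G where "finite G" "G \<subseteq> C" "supersets X G \<subseteq> b"
        using Int.IH(2) C unfolding finitely_determined_def by blast
      ultimately show "\<exists>H. finite H \<and> H \<subseteq> C \<and> supersets X H \<subseteq> a \<inter> b"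
        by (intro exI[of _ "F \<union> G"]) (auto simp: supersets_def)
    qed
  next
    case (UN K)
    show ?case unfolding finitely_determined_def
    proof (intro conjI ballI)
      show "\<Union>K \<subseteq> nonempty_subsets X"
        using UN.IH unfolding finitely_determined_def by blast
      fix C assume "C \<in> \<Union>K"
      then obtain k where k: "k \<in> K" "C \<in> k" by blast
      then obtain F where "finite F" "F \<subseteq> C" "supersets X F \<subseteq> k"
        using UN.IH[OF k(1)] unfolding finitely_determined_def by blast
      with k show "\<exists>F. finite F \<and> F \<subseteq> C \<and> supersets X F \<subseteq> \<Union>K" by blast
    qed
  next
    case (Basis s)
    then obtain U where s: "s = lowerL X U" by auto
    show ?case unfolding finitely_determined_def
    proof (intro conjI ballI)
      show "s \<subseteq> nonempty_subsets X" using s by (auto simp: lowerL_def)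
      fix C assume "C \<in> s"
      then obtain c where "c \<in> C" "c \<in> U" using s by (auto simp: lowerL_def)
      then show "\<exists>F. finite F \<and> F \<subseteq> C \<and> supersets X F \<subseteq> s"
        using s by (intro exI[of _ "{c}"]) (auto simp: lowerL_def supersets_def)
    qed
  qed
qed

lemma openin_lower_semifinite_supersets:
  assumes "finite C" "C \<subseteq> X"
  shows "openin (lower_semifinite X) (supersets X C)"
proof -
  have "generate_topology_on {lowerL X U | U. U \<subseteq> X} (supersets X C)"
    using assms
  proof (induction C rule: finite_induct)
    case empty
    have "supersets X {} = lowerL X X"
      unfolding supersets_def lowerL_def nonempty_subsets_def by auto
    then show ?case by (simp add: lowerL_in_subbase)
  next
    case (insert c F)
    have "supersets X (insert c F) = supersets X F \<inter> lowerL X {c}"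
      unfolding supersets_def lowerL_def by auto
    with insert show ?case by (simp add: generate_topology_on.Int lowerL_in_subbase)
  qed
  then show ?thesis
    unfolding lower_semifinite_def by (simp add: openin_topology_generated_by_iff)
qed

lemma topspace_lower_semifinite: "topspace (lower_semifinite X) = nonempty_subsets X"
proof -
  have "topspace (lower_semifinite X) \<subseteq> nonempty_subsets X"
    using openin_lower_semifinite_imp_finitely_determined[OF openin_topspace]
    unfolding finitely_determined_def by blast
  moreover have "openin (lower_semifinite X) (nonempty_subsets X)"
    using openin_lower_semifinite_supersets[of "{}" X] by (simp add: supersets_def)
  ultimately show ?thesis using openin_subset by blast
qed

lemma continuous_map_strong_lower_to_lower:
  "continuous_map (strong_lower_semifinite X) (lower_semifinite X) id"
  unfolding continuous_map_def topspace_strong_lower_semifinite topspace_lower_semifinite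
proof (intro conjI allI impI)
  fix W assume "openin (lower_semifinite X) W"
  then have "upclosed X W"
    by (intro finitely_determined_imp_upclosed openin_lower_semifinite_imp_finitely_determined)
  moreover from this have "{C \<in> nonempty_subsets X. id C \<in> W} = W"
    unfolding upclosed_def by auto
  ultimately show "openin (strong_lower_semifinite X) {C \<in> nonempty_subsets X. id C \<in> W}"
    by (simp add: openin_strong_lower_semifinite_iff)
qed auto

lemma continuous_at_point_lower_to_strong_lower_iff:
  assumes C: "C \<in> nonempty_subsets X"
  shows "continuous_at_point (lower_semifinite X) (strong_lower_semifinite X) id C \<longleftrightarrow> finite C"
proof
  assume cont: "continuous_at_point (lower_semifinite X) (strong_lower_semifinite X) id C"
  have "openin (strong_lower_semifinite X) (supersets X C) \<and> id C \<in> supersets X C"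
    using openin_strong_lower_semifinite_supersets self_in_supersets[OF C] by simp
  then obtain W where W: "openin (lower_semifinite X) W" "C \<in> W" "id ` W \<subseteq> supersets X C"
    using cont unfolding continuous_at_point_def by meson
  then obtain F where F: "finite F" "F \<subseteq> C" "supersets X F \<subseteq> W"
    using openin_lower_semifinite_imp_finitely_determined[OF W(1)] W(2)
    unfolding finitely_determined_def by blast
  obtain c where c: "c \<in> C" using C unfolding nonempty_subsets_def by auto
  \<comment> \<open>\<open>F\<close> itself may be empty, so enlarge it by a point of \<open>C\<close> to get an element of \<open>2^X\<close>.\<close>
  have "insert c F \<in> supersets X F"
    using F c C unfolding supersets_def nonempty_subsets_def by auto
  with F W have "C \<subseteq> insert c F" unfolding supersets_def by auto
  with F(1) show "finite C" using finite_subset by blast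
next
  assume "finite C"
  then have open_C: "openin (lower_semifinite X) (supersets X C)"
    using C openin_lower_semifinite_supersets unfolding nonempty_subsets_def by blast
  show "continuous_at_point (lower_semifinite X) (strong_lower_semifinite X) id C"
    unfolding continuous_at_point_def
  proof (intro conjI allI impI)
    show "id C \<in> topspace (strong_lower_semifinite X)"
      using C by (simp add: topspace_strong_lower_semifinite)
    fix V assume "openin (strong_lower_semifinite X) V \<and> id C \<in> V"
    then have "supersets X C \<subseteq> V"
      by (simp add: openin_strong_lower_semifinite_iff supersets_subset_upclosed)
    with open_C self_in_supersets[OF C]
    show "\<exists>U. openin (lower_semifinite X) U \<and> C \<in> U \<and> id ` U \<subseteq> V" by auto
  qed
qed

lemma openin_alex_topology:
  "openin (alex_topology S le) A \<longleftrightarrow> A \<subseteq> S \<and> (\<forall>x\<in>A. \<forall>y\<in>S. le y x \<longrightarrow> y \<in> A)"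
proof -
  have "istopology (\<lambda>A. A \<subseteq> S \<and> (\<forall>x\<in>A. \<forall>y\<in>S. le y x \<longrightarrow> y \<in> A))"
    unfolding istopology_def by blast
  then show ?thesis unfolding alex_topology_def by (simp add: topology_inverse')
qed

lemma alex_topology_cong:
  assumes "\<And>x y. x \<in> S \<Longrightarrow> y \<in> S \<Longrightarrow> le y x \<longleftrightarrow> le' y x"
  shows "alex_topology S le = alex_topology S le'"
  unfolding topology_eq openin_alex_topology using assms by blast

lemma openin_upper_semifinite_iff: "openin (upper_semifinite X) W \<longleftrightarrow> downclosed X W"
proof
  assume "openin (upper_semifinite X) W"
  then have "generate_topology_on {{F \<in> nonempty_subsets X. F \<subseteq> U} | U. U \<subseteq> X} W"
    unfolding upper_semifinite_def by (simp add: openin_topology_generated_by_iff)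
  then show "downclosed X W"
    by (induction rule: generate_topology_on.induct) (unfold downclosed_def, blast+)
next
  assume down: "downclosed X W"
  let ?B = "\<lambda>C. {F \<in> nonempty_subsets X. F \<subseteq> C}"
  have "W = \<Union>(?B ` W)" using down unfolding downclosed_def by auto
  moreover have "generate_topology_on {?B U | U. U \<subseteq> X} (\<Union>(?B ` W))"
  proof (rule generate_topology_on.UN, clarify)
    fix C assume "C \<in> W"
    then have "C \<subseteq> X" using down unfolding downclosed_def nonempty_subsets_def by auto
    then show "generate_topology_on {?B U | U. U \<subseteq> X} (?B C)"
      by (intro generate_topology_on.Basis) auto
  qed
  ultimately show "openin (upper_semifinite X) W"
    unfolding upper_semifinite_def by (simp add: openin_topology_generated_by_iff)
qed

lemma alex_topology_subset_eq_upper_semifinite: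
  "alex_topology (nonempty_subsets X) (\<lambda>D C. D \<subseteq> C) = upper_semifinite X"
  unfolding topology_eq openin_alex_topology openin_upper_semifinite_iff downclosed_def by blast

lemma alex_topology_opposite_strong_lower_eq_upper_semifinite:
  "alex_topology (nonempty_subsets X) (\<lambda>D C. alex_le (strong_lower_semifinite X) C D)
     = upper_semifinite X"
  by (subst alex_topology_cong[where le' = "\<lambda>D C. D \<subseteq> C"])
     (simp_all add: alex_le_strong_lower_semifinite alex_topology_subset_eq_upper_semifinite)

theorem mainTheorem3:
  fixes X :: "'a set"
  shows "topspace (strong_lower_semifinite X) = nonempty_subsets X
    \<and> alexandroff_space (strong_lower_semifinite X) \<and> t0_space (strong_lower_semifinite X)
    \<and> (\<forall>C\<in>nonempty_subsets X.
          min_open_nbhd (strong_lower_semifinite X) C = nonempty_subsets X \<inter> (\<Inter>c\<in>C. lowerL X {c})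
        \<and> min_open_nbhd (strong_lower_semifinite X) C = {D \<in> nonempty_subsets X. C \<subseteq> D})
    \<and> (\<forall>C\<in>nonempty_subsets X. \<forall>D\<in>nonempty_subsets X.
          alex_le (strong_lower_semifinite X) D C \<longleftrightarrow> C \<subseteq> D)
    \<and> continuous_map (strong_lower_semifinite X) (lower_semifinite X) id
    \<and> (\<forall>C\<in>nonempty_subsets X.
          continuous_at_point (lower_semifinite X) (strong_lower_semifinite X) id C \<longleftrightarrow> finite C)
    \<and> alex_topology (nonempty_subsets X) (\<lambda>D C. D \<subseteq> C) = upper_semifinite X
    \<and> alex_topology (nonempty_subsets X) (\<lambda>D C. alex_le (strong_lower_semifinite X) C D)
        = upper_semifinite X"
proof -
  have "min_open_nbhd (strong_lower_semifinite X) C = {D \<in> nonempty_subsets X. C \<subseteq> D}"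
    and "min_open_nbhd (strong_lower_semifinite X) C = nonempty_subsets X \<inter> (\<Inter>c\<in>C. lowerL X {c})"
    if "C \<in> nonempty_subsets X" for C
    using min_open_nbhd_strong_lower_semifinite[OF that] supersets_eq_Inter_lowerL[of X C]
    by (simp_all add: supersets_def)
  then show ?thesis
    by (intro conjI ballI topspace_strong_lower_semifinite alexandroff_strong_lower_semifinite
        t0_strong_lower_semifinite alex_le_strong_lower_semifinite
        continuous_map_strong_lower_to_lower continuous_at_point_lower_to_strong_lower_iff
        alex_topology_subset_eq_upper_semifinite
        alex_topology_opposite_strong_lower_eq_upper_semifinite)
qed

end
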